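(* Let $M$ be a nest with standard labelling. Then: (i) if $C$ is a non-spanning circuit of $M$, then $|C|\in\{4,6\}$; (ii) if $C$ is a circuit of $M$ with $|C|=4$, then $C$ is one of the $15$ circuits listed in condition (1) of the definition of a nest; (iii) if $\{e_i,e_j,e_k',e_\ell'\}$ is a circuit of $M$, then $\{e_i,e_j\}\cup(\{e_1',\dots,e_6'\}-\{e_k',e_\ell'\})$ and $(\{e_1,\dots,e_6\}-\{e_i,e_j\})\cup\{e_k',e_\ell'\}$ are $6$-element circuits of $M$; (iv) if $C$ is a circuit of $M$ with $|C|=6$ that is not described in (iii), then $C\in\{\{e_1,\dots,e_6\},\{e_1',\dots,e_6'\}\}$.
   Context: A matroid $M$ is a nest if $r(M)=r^*(M)=6$ and its ground set has a labelling $\{e_1,e_1',\dots,e_6,e_6'\}$ such that (1) the following sets are circuits: $\{e_1,e_2,e_3',e_4'\}$, $\{e_3,e_4,e_5',e_6'\}$, $\{e_5,e_6,e_1',e_2'\}$, $\{e_5,e_4,e_1',e_3'\}$, $\{e_1,e_3,e_2',e_6'\}$, $\{e_2,e_6,e_5',e_4'\}$, $\{e_2,e_3,e_5',e_1'\}$, $\{e_5,e_1,e_4',e_6'\}$, $\{e_4,e_6,e_2',e_3'\}$, $\{e_4,e_1,e_2',e_5'\}$, $\{e_2,e_5,e_3',e_6'\}$, $\{e_3,e_6,e_4',e_1'\}$, $\{e_3,e_5,e_4',e_2'\}$, $\{e_4,e_2,e_1',e_6'\}$, $\{e_1,e_6,e_3',e_5'\}$; and (2) the following sets are cocircuits: $\{e_3,e_4,e_1',e_2'\}$,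 $\{e_1,e_2,e_5',e_6'\}$, $\{e_5,e_6,e_3',e_4'\}$, $\{e_1,e_3,e_5',e_4'\}$, $\{e_5,e_4,e_2',e_6'\}$, $\{e_2,e_6,e_1',e_3'\}$, $\{e_5,e_1,e_2',e_3'\}$, $\{e_2,e_3,e_4',e_6'\}$, $\{e_4,e_6,e_5',e_1'\}$, $\{e_2,e_5,e_4',e_1'\}$, $\{e_4,e_1,e_3',e_6'\}$, $\{e_3,e_6,e_2',e_5'\}$, $\{e_4,e_2,e_3',e_5'\}$, $\{e_3,e_5,e_1',e_6'\}$, $\{e_1,e_6,e_4',e_2'\}$. $M$ has standard labelling if its ground set is literally $\{e_1,e_1',\dots,e_6,e_6'\}$ with this labelling being the identity. *)

theory Defs
  imports Main
begin

definition matroid :: "'a set \<Rightarrow> ('a set \<Rightarrow> bool) \<Rightarrow> bool" where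
  "matroid E indep \<longleftrightarrow> finite E \<and> indep {} \<and>
     (\<forall>I. indep I \<longrightarrow> I \<subseteq> E) \<and>
     (\<forall>I J. indep J \<and> I \<subseteq> J \<longrightarrow> indep I) \<and>
     (\<forall>I J. indep I \<and> indep J \<and> card I < card J \<longrightarrow> (\<exists>x\<in>J - I. indep (insert x I)))"

definition mrank :: "('a set \<Rightarrow> bool) \<Rightarrow> 'a set \<Rightarrow> nat" where
  "mrank indep X = Max {card I | I. I \<subseteq> X \<and> indep I}"

definition basis :: "'a set \<Rightarrow> ('a set \<Rightarrow> bool) \<Rightarrow> 'a set \<Rightarrow> bool" where
  "basis E indep B \<longleftrightarrow> B \<subseteq> E \<and> indep B \<and> (\<forall>x\<in>E - B. \<not> indep (insert x B))"

definition circuit :: "'a set \<Rightarrow> ('a set \<Rightarrow> bool) \<Rightarrow> 'a set \<Rightarrow> bool" where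
  "circuit E indep C \<longleftrightarrow> C \<subseteq> E \<and> \<not> indep C \<and> (\<forall>D. D \<subset> C \<longrightarrow> indep D)"

definition dual_indep :: "'a set \<Rightarrow> ('a set \<Rightarrow> bool) \<Rightarrow> 'a set \<Rightarrow> bool" where
  "dual_indep E indep I \<longleftrightarrow> I \<subseteq> E \<and> (\<exists>B. basis E indep B \<and> I \<inter> B = {})"

definition cocircuit :: "'a set \<Rightarrow> ('a set \<Rightarrow> bool) \<Rightarrow> 'a set \<Rightarrow> bool" where
  "cocircuit E indep C \<longleftrightarrow> circuit E (dual_indep E indep) C"

text \<open>E i stands for e_i, P i for e_i' (i = 1..6).\<close>
datatype elt = E nat | P nat

definition Es :: "elt set" where "Es = E ` {1..6}"
definition Ps :: "elt set" where "Ps = P ` {1..6}"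
definition ground :: "elt set" where "ground = Es \<union> Ps"

definition quad :: "nat \<Rightarrow> nat \<Rightarrow> nat \<Rightarrow> nat \<Rightarrow> elt set" where
  "quad i j k l = {E i, E j, P k, P l}"

definition nest_circuits :: "elt set set" where
  "nest_circuits = {quad 1 2 3 4, quad 3 4 5 6, quad 5 6 1 2, quad 5 4 1 3, quad 1 3 2 6,
     quad 2 6 5 4, quad 2 3 5 1, quad 5 1 4 6, quad 4 6 2 3, quad 4 1 2 5, quad 2 5 3 6,
     quad 3 6 4 1, quad 3 5 4 2, quad 4 2 1 6, quad 1 6 3 5}"

definition nest_cocircuits :: "elt set set" where
  "nest_cocircuits = {quad 3 4 1 2, quad 1 2 5 6, quad 5 6 3 4, quad 1 3 5 4, quad 5 4 2 6,
     quad 2 6 1 3, quad 5 1 2 3, quad 2 3 4 6, quad 4 6 5 1, quad 2 5 4 1, quad 4 1 3 6,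
     quad 3 6 2 5, quad 4 2 3 5, quad 3 5 1 6, quad 1 6 4 2}"

definition nest_std :: "(elt set \<Rightarrow> bool) \<Rightarrow> bool" where
  "nest_std indep \<longleftrightarrow> matroid ground indep \<and>
     mrank indep ground = 6 \<and> mrank (dual_indep ground indep) ground = 6 \<and>
     (\<forall>C\<in>nest_circuits. circuit ground indep C) \<and>
     (\<forall>C\<in>nest_cocircuits. cocircuit ground indep C)"

end

theory Submission
  imports Defs
begin

(* A circuit and a cocircuit never meet in exactly one element, so no circuit of a nest meets
   one of the fifteen listed cocircuits in exactly one element.  A finite check shows that
   every nonempty set with this property contains one of 47 candidates: the fifteen listed
   4-circuits Q, the thirty sets Q \<triangle> {e_1',...,e_6'} and Q \<triangle> {e_1,...,e_6},
   and these two 6-sets themselves.  The thirty hexads avoid a cocircuit, so they are dependent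
   (the rank is 6), and they contain no smaller candidate, so they are circuits.  Finally a
   circuit C with |C| <= 6 (in particular a non-spanning one, as |C| <= r(C) + 1) contains a
   candidate, which must be C itself. *)

lemma matroid_indep_empty: "matroid G indep \<Longrightarrow> indep {}"
  by (simp add: matroid_def)

lemma matroid_indep_subset_ground: "matroid G indep \<Longrightarrow> indep I \<Longrightarrow> I \<subseteq> G"
  by (simp add: matroid_def)

lemma matroid_indep_subset:
  assumes "matroid G indep" "indep J" "I \<subseteq> J"
  shows "indep I"
proof -
  have "\<forall>I J. indep J \<and> I \<subseteq> J \<longrightarrow> indep I" using assms(1) by (simp add: matroid_def)
  with assms(2,3) show ?thesis by blast
qed

lemma matroid_finite: "matroid G indep \<Longrightarrow> finite G"
  by (simp add: matroid_def)

lemma matroid_indep_finite: "matroid G indep \<Longrightarrow> indep I \<Longrightarrow> finite I"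
  by (meson finite_subset matroid_finite matroid_indep_subset_ground)

lemma finite_indep_cards:
  assumes "finite X"
  shows "finite {card I | I. I \<subseteq> X \<and> indep I}"
proof (rule finite_subset)
  show "{card I | I. I \<subseteq> X \<and> indep I} \<subseteq> card ` Pow X" by blast
  show "finite (card ` Pow X)" using assms by simp
qed

lemma card_le_mrank: "finite X \<Longrightarrow> indep I \<Longrightarrow> I \<subseteq> X \<Longrightarrow> card I \<le> mrank indep X"
  unfolding mrank_def by (rule Max_ge[OF finite_indep_cards]) auto

lemma mrank_witness:
  assumes "matroid G indep" "finite X"
  obtains I where "I \<subseteq> X" "indep I" "card I = mrank indep X"
proof -
  have "finite {card I | I. I \<subseteq> X \<and> indep I}"
    using assms(2) by (rule finite_indep_cards)
  moreover have "{card I | I. I \<subseteq> X \<and> indep I} \<noteq> {}"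
    using matroid_indep_empty[OF assms(1)] by blast
  ultimately have "mrank indep X \<in> {card I | I. I \<subseteq> X \<and> indep I}"
    unfolding mrank_def by (rule Max_in)
  then show ?thesis using that by auto
qed

lemma matroid_augment:
  assumes "matroid G indep" "indep I" "indep J" "card I < card J"
  shows "\<exists>x\<in>J - I. indep (insert x I)"
proof -
  have "\<forall>I J. indep I \<and> indep J \<and> card I < card J \<longrightarrow> (\<exists>x\<in>J - I. indep (insert x I))"
    using assms(1) by (simp add: matroid_def)
  with assms(2-4) show ?thesis by blast
qed

lemma matroid_indep_extend:
  assumes M: "matroid G indep"
  shows "indep I \<Longrightarrow> indep J \<Longrightarrow> card I \<le> card J
    \<Longrightarrow> \<exists>K. indep K \<and> I \<subseteq> K \<and> K \<subseteq> I \<union> J \<and> card K = card J"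
proof (induction "card J - card I" arbitrary: I)
  case 0
  then show ?case by (intro exI[of _ I]) auto
next
  case (Suc n)
  then have "card I < card J" by simp
  then obtain x where x: "x \<in> J - I" "indep (insert x I)"
    using matroid_augment[OF M Suc.prems(1,2)] by blast
  have "card (insert x I) = Suc (card I)"
    using x(1) matroid_indep_finite[OF M Suc.prems(1)] by simp
  then have "n = card J - card (insert x I)" "card (insert x I) \<le> card J"
    using Suc.hyps(2) \<open>card I < card J\<close> by simp_all
  then obtain K where K: "indep K" "insert x I \<subseteq> K" "K \<subseteq> insert x I \<union> J" "card K = card J"
    using Suc.hyps(1)[OF _ x(2) Suc.prems(2)] by blast
  moreover have "I \<subseteq> K" "K \<subseteq> I \<union> J" using K(2,3) x(1) by auto
  ultimately show ?case by blast
qed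

lemma basis_card_eq_mrank:
  assumes M: "matroid G indep" and B: "basis G indep B"
  shows "card B = mrank indep G"
proof (rule antisym)
  have "B \<subseteq> G" "indep B" using B by (auto simp: basis_def)
  then show "card B \<le> mrank indep G" using card_le_mrank matroid_finite[OF M] by blast
  show "mrank indep G \<le> card B"
  proof (rule ccontr)
    assume "\<not> mrank indep G \<le> card B"
    moreover obtain I where I: "I \<subseteq> G" "indep I" "card I = mrank indep G"
      using mrank_witness[OF M matroid_finite[OF M]] .
    ultimately obtain x where "x \<in> I - B" "indep (insert x B)"
      using matroid_augment[OF M \<open>indep B\<close> I(2)] by auto
    then show False using B I(1) by (auto simp: basis_def)
  qed
qed

lemma basis_if_card_eq_mrank:
  assumes M: "matroid G indep" and "indep B" "card B = mrank indep G"
  shows "basis G indep B"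
  unfolding basis_def
proof (intro conjI ballI notI)
  show "B \<subseteq> G" using matroid_indep_subset_ground[OF M \<open>indep B\<close>] .
  fix x assume x: "x \<in> G - B" and "indep (insert x B)"
  then have "card (insert x B) \<le> mrank indep G"
    using card_le_mrank matroid_finite[OF M] \<open>B \<subseteq> G\<close> by blast
  then show False
    using x assms(3) matroid_indep_finite[OF M \<open>indep B\<close>] by simp
qed fact

lemma cocircuit_meets_basis:
  "cocircuit G indep D \<Longrightarrow> basis G indep B \<Longrightarrow> D \<inter> B \<noteq> {}"
  unfolding cocircuit_def circuit_def dual_indep_def by blast

lemma circuit_nonempty: "matroid G indep \<Longrightarrow> circuit G indep C \<Longrightarrow> C \<noteq> {}"
  using matroid_indep_empty unfolding circuit_def by blast

lemma circuit_subset_eq: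
  "circuit G indep C \<Longrightarrow> circuit G indep C' \<Longrightarrow> C' \<subseteq> C \<Longrightarrow> C' = C"
  unfolding circuit_def by blast

lemma circuit_card_le_Suc_mrank:
  assumes M: "matroid G indep" and C: "circuit G indep C"
  shows "card C \<le> Suc (mrank indep C)"
proof -
  obtain e where e: "e \<in> C" using circuit_nonempty[OF M C] by blast
  have "finite C"
    using C matroid_finite[OF M] finite_subset unfolding circuit_def by blast
  moreover have "indep (C - {e})" using C e unfolding circuit_def by blast
  ultimately have "card (C - {e}) \<le> mrank indep C" using card_le_mrank by blast
  then show ?thesis using \<open>finite C\<close> e by (simp add: card_Diff_singleton)
qed

lemma dependent_contains_circuit:
  assumes M: "matroid G indep"
  shows "D \<subseteq> G \<Longrightarrow> \<not> indep D \<Longrightarrow> \<exists>C\<subseteq>D. circuit G indep C"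
proof (induction "card D" arbitrary: D rule: less_induct)
  case less
  show ?case
  proof (cases "\<forall>D'. D' \<subset> D \<longrightarrow> indep D'")
    case True
    then have "circuit G indep D" using less.prems unfolding circuit_def by blast
    then show ?thesis by blast
  next
    case False
    then obtain D' where D': "D' \<subset> D" "\<not> indep D'" by blast
    have "finite D" using less.prems(1) matroid_finite[OF M] finite_subset by blast
    then have "card D' < card D" using D'(1) by (rule psubset_card_mono)
    moreover have "D' \<subseteq> G" using D'(1) less.prems(1) by blast
    ultimately obtain C where "C \<subseteq> D'" "circuit G indep C"
      using less.hyps D'(2) by blast
    then show ?thesis using D'(1) by blast
  qed
qed

(* Extend C - e by elements of a basis B avoiding D - e to a basis K; as K meets D, e \<in> K,
   so C \<subseteq> K would be independent. *)
lemma circuit_cocircuit_Int_not_singleton: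
  assumes M: "matroid G indep" and C: "circuit G indep C" and D: "cocircuit G indep D"
  shows "C \<inter> D \<noteq> {e}"
proof
  assume CD: "C \<inter> D = {e}"
  have "dual_indep G indep (D - {e})"
    using D CD unfolding cocircuit_def circuit_def by blast
  then obtain B where B: "basis G indep B" "(D - {e}) \<inter> B = {}"
    unfolding dual_indep_def by blast
  have "C - {e} \<subseteq> G" "indep (C - {e})" using C CD unfolding circuit_def by blast+
  then have "card (C - {e}) \<le> card B"
    using card_le_mrank[of G indep "C - {e}"] matroid_finite[OF M] basis_card_eq_mrank[OF M B(1)] by simp
  moreover have "indep B" using B(1) by (simp add: basis_def)
  ultimately obtain K where K: "indep K" "C - {e} \<subseteq> K" "K \<subseteq> (C - {e}) \<union> B" "card K = card B"
    using matroid_indep_extend[OF M \<open>indep (C - {e})\<close>] by blast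
  have "basis G indep K"
    using basis_if_card_eq_mrank[OF M K(1)] K(4) basis_card_eq_mrank[OF M B(1)] by simp
  then obtain x where x: "x \<in> D" "x \<in> K" using cocircuit_meets_basis[OF D] by blast
  then have "x = e" using CD K(3) B(2) by blast
  then have "C \<subseteq> K" using K(2) x(2) by blast
  then show False
    using matroid_indep_subset[OF M K(1)] C unfolding circuit_def by blast
qed

lemma Es_eq: "Es = {E 1, E 2, E 3, E 4, E 5, E 6}"
  by (auto simp: Es_def)

lemma Ps_eq: "Ps = {P 1, P 2, P 3, P 4, P 5, P 6}"
  by (auto simp: Ps_def)

lemma ground_eq: "ground = {E 1, E 2, E 3, E 4, E 5, E 6, P 1, P 2, P 3, P 4, P 5, P 6}"
  by (auto simp: ground_def Es_eq Ps_eq)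

lemma card_Int_eq_1_iff:
  "card (S \<inter> D) = 1 \<longleftrightarrow> (\<exists>x\<in>D. x \<in> S \<and> (\<forall>y\<in>D. y \<in> S \<longrightarrow> y = x))"
  by (auto simp: card_1_singleton_iff)

definition nest_orthogonal :: "elt set \<Rightarrow> bool" where
  "nest_orthogonal S \<longleftrightarrow> (\<forall>D\<in>nest_cocircuits. card (S \<inter> D) \<noteq> 1)"

definition nest_hexads :: "elt set set" where
  "nest_hexads = (\<lambda>Q. sym_diff Q Ps) ` nest_circuits \<union> (\<lambda>Q. sym_diff Q Es) ` nest_circuits"

definition small_circuit_candidates :: "elt set set" where
  "small_circuit_candidates = nest_circuits \<union> nest_hexads \<union> {Es, Ps}"

(* Pure enumeration: every hypothesis becomes a propositional constraint on the twelve atoms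
   x \<in> S, and SAT refutes their conjunction. *)
lemma nest_orthogonal_contains_candidate:
  assumes "S \<subseteq> ground" "S \<noteq> {}" "nest_orthogonal S"
  shows "\<exists>Q\<in>small_circuit_candidates. Q \<subseteq> S"
proof (rule ccontr)
  assume none: "\<not> ?thesis"
  note [simp] = insert_Diff_if bex_Un
  have "\<exists>x\<in>ground. x \<in> S" using assms(1,2) by blast
  note nonempty = this[unfolded ground_eq, simplified]
  note orth = assms(3)[unfolded nest_orthogonal_def nest_cocircuits_def quad_def,
      simplified card_Int_eq_1_iff, simplified]
  note none' = none[unfolded small_circuit_candidates_def nest_hexads_def nest_circuits_def
      quad_def Es_eq Ps_eq, simplified]
  show False using nonempty orth none' by sat
qed

lemma card_nest_circuit: "Q \<in> nest_circuits \<Longrightarrow> card Q = 4"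
  by (auto simp: nest_circuits_def quad_def)

lemma card_nest_hexad: "T \<in> nest_hexads \<Longrightarrow> card T = 6"
  by (auto simp: nest_hexads_def nest_circuits_def quad_def Es_eq Ps_eq insert_Diff_if)

lemma card_small_circuit_candidate:
  "Q \<in> small_circuit_candidates \<Longrightarrow> Q \<in> nest_circuits \<and> card Q = 4 \<or> card Q = 6"
  using card_nest_circuit card_nest_hexad
  by (auto simp: small_circuit_candidates_def Es_eq Ps_eq)

lemma nest_hexads_avoid_cocircuits: "\<forall>T\<in>nest_hexads. \<exists>D\<in>nest_cocircuits. D \<inter> T = {}"
  by (simp add: nest_hexads_def nest_circuits_def nest_cocircuits_def quad_def Es_eq Ps_eq insert_Diff_if)

lemma nest_circuits_not_subset_hexads: "\<forall>Q\<in>nest_circuits. \<forall>T\<in>nest_hexads. \<not> Q \<subseteq> T"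
  by (simp add: nest_hexads_def nest_circuits_def quad_def Es_eq Ps_eq insert_Diff_if)

lemma nest_circuit_quad: "Q \<in> nest_circuits \<Longrightarrow> \<exists>i j k l. Q = {E i, E j, P k, P l}"
  by (auto simp: nest_circuits_def quad_def)

lemma sym_diff_quad:
  assumes "{E i, E j, P k, P l} \<subseteq> ground"
  shows "sym_diff {E i, E j, P k, P l} Ps = {E i, E j} \<union> (Ps - {P k, P l})"
    and "sym_diff {E i, E j, P k, P l} Es = (Es - {E i, E j}) \<union> {P k, P l}"
  using assms by (auto simp: ground_def Es_def Ps_def)

lemma circuit_nest_orthogonal:
  assumes N: "nest_std indep" and C: "circuit ground indep C"
  shows "nest_orthogonal C"
  unfolding nest_orthogonal_def
proof
  fix D assume "D \<in> nest_cocircuits"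
  then have "cocircuit ground indep D" and M: "matroid ground indep"
    using N by (simp_all add: nest_std_def)
  then show "card (C \<inter> D) \<noteq> 1"
    using circuit_cocircuit_Int_not_singleton[OF M C] by (auto simp: card_1_singleton_iff)
qed

lemma nest_circuit_contains_candidate:
  assumes N: "nest_std indep" and C: "circuit ground indep C"
  obtains Q where "Q \<in> small_circuit_candidates" "Q \<subseteq> C"
proof -
  have "C \<subseteq> ground" "C \<noteq> {}"
    using C circuit_nonempty N by (auto simp: circuit_def nest_std_def)
  then show ?thesis
    using nest_orthogonal_contains_candidate circuit_nest_orthogonal[OF N C] that by blast
qed

lemma nest_hexad_circuit:
  assumes N: "nest_std indep" and T: "T \<in> nest_hexads"
  shows "circuit ground indep T"
proof -
  have M: "matroid ground indep" and R: "mrank indep ground = 6"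
    using N by (simp_all add: nest_std_def)
  obtain Q where Q: "Q \<in> nest_circuits" "T = sym_diff Q Ps \<or> T = sym_diff Q Es"
    using T unfolding nest_hexads_def by blast
  have "Q \<subseteq> ground" using N Q(1) by (simp add: nest_std_def circuit_def)
  then have ground: "T \<subseteq> ground" using Q(2) by (auto simp: ground_def)
  have "\<not> indep T"
  proof
    assume "indep T"
    then have "basis ground indep T"
      using basis_if_card_eq_mrank[OF M] card_nest_hexad[OF T] R by simp
    moreover obtain D where D: "D \<in> nest_cocircuits" "D \<inter> T = {}"
      using nest_hexads_avoid_cocircuits T by blast
    moreover have "cocircuit ground indep D" using N D(1) by (simp add: nest_std_def)
    ultimately show False using cocircuit_meets_basis by blast
  qed
  moreover have "indep D" if "D \<subset> T" for D
  proof (rule ccontr)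
    assume "\<not> indep D"
    moreover have "D \<subseteq> ground" using that ground by blast
    ultimately obtain C where C: "C \<subseteq> D" "circuit ground indep C"
      using dependent_contains_circuit[OF M] by blast
    obtain Q where Q: "Q \<in> small_circuit_candidates" "Q \<subseteq> C"
      using nest_circuit_contains_candidate[OF N C(2)] by blast
    then have "Q \<subset> T" using C(1) that by blast
    have "finite T" using ground finite_subset by (auto simp: ground_eq)
    then have "card Q < 6" using psubset_card_mono[OF _ \<open>Q \<subset> T\<close>] card_nest_hexad[OF T] by simp
    then have "Q \<in> nest_circuits" using card_small_circuit_candidate[OF Q(1)] by auto
    then show False using nest_circuits_not_subset_hexads T \<open>Q \<subset> T\<close> by blast
  qed
  ultimately show ?thesis using ground unfolding circuit_def by blast
qed

lemma nest_small_circuit_is_candidate: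
  assumes N: "nest_std indep" and C: "circuit ground indep C" and "card C \<le> 6"
  shows "C \<in> small_circuit_candidates"
proof -
  obtain Q where Q: "Q \<in> small_circuit_candidates" "Q \<subseteq> C"
    using nest_circuit_contains_candidate[OF N C] .
  have "Q = C"
  proof (cases "Q \<in> nest_circuits \<union> nest_hexads")
    case True
    then have "circuit ground indep Q" using N nest_hexad_circuit by (auto simp: nest_std_def)
    then show ?thesis using circuit_subset_eq C Q(2) by blast
  next
    case False
    then have "card Q = 6" using card_small_circuit_candidate[OF Q(1)] by blast
    moreover have "finite C" using C finite_subset by (auto simp: circuit_def ground_eq)
    ultimately have "card Q = card C" using card_mono[OF _ Q(2)] \<open>card C \<le> 6\<close> by simp
    then show ?thesis using card_subset_eq[OF \<open>finite C\<close> Q(2)] by blast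
  qed
  with Q show ?thesis by simp
qed

lemma nest_quad_circuit_listed:
  assumes N: "nest_std indep" and C: "circuit ground indep {E i, E j, P k, P l}"
  shows "{E i, E j, P k, P l} \<in> nest_circuits"
proof -
  have "card {E i, E j, P k, P l} \<le> 4"
    using card_length[of "[E i, E j, P k, P l]"] by simp
  then show ?thesis
    using nest_small_circuit_is_candidate[OF N C] card_small_circuit_candidate by fastforce
qed

lemma nest_hexads_of_quad_circuit:
  assumes N: "nest_std indep" and C: "circuit ground indep {E i, E j, P k, P l}"
  shows "{E i, E j} \<union> (Ps - {P k, P l}) \<in> nest_hexads"
    and "(Es - {E i, E j}) \<union> {P k, P l} \<in> nest_hexads"
proof -
  have "{E i, E j, P k, P l} \<in> nest_circuits" by (rule nest_quad_circuit_listed[OF N C])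
  then have "sym_diff {E i, E j, P k, P l} Ps \<in> nest_hexads"
    and "sym_diff {E i, E j, P k, P l} Es \<in> nest_hexads"
    unfolding nest_hexads_def by blast+
  moreover have "{E i, E j, P k, P l} \<subseteq> ground" using C by (simp add: circuit_def)
  ultimately show "{E i, E j} \<union> (Ps - {P k, P l}) \<in> nest_hexads"
    and "(Es - {E i, E j}) \<union> {P k, P l} \<in> nest_hexads"
    by (simp_all add: sym_diff_quad)
qed

lemma nest_hexad_from_quad_circuit:
  assumes N: "nest_std indep" and T: "T \<in> nest_hexads"
  shows "\<exists>i j k l. circuit ground indep {E i, E j, P k, P l} \<and>
    (T = {E i, E j} \<union> (Ps - {P k, P l}) \<or> T = (Es - {E i, E j}) \<union> {P k, P l})"
proof -
  obtain Q where Q: "Q \<in> nest_circuits" "T = sym_diff Q Ps \<or> T = sym_diff Q Es"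
    using T unfolding nest_hexads_def by blast
  obtain i j k l where Q_eq: "Q = {E i, E j, P k, P l}" using nest_circuit_quad[OF Q(1)] by blast
  have "circuit ground indep Q" using N Q(1) by (simp add: nest_std_def)
  then have "circuit ground indep {E i, E j, P k, P l}" "{E i, E j, P k, P l} \<subseteq> ground"
    by (simp_all add: Q_eq circuit_def)
  moreover have "T = {E i, E j} \<union> (Ps - {P k, P l}) \<or> T = (Es - {E i, E j}) \<union> {P k, P l}"
    using Q(2) sym_diff_quad[OF \<open>{E i, E j, P k, P l} \<subseteq> ground\<close>] by (simp add: Q_eq)
  ultimately show ?thesis by blast
qed

theorem lemma3p3:
  fixes indep :: "elt set \<Rightarrow> bool"
  assumes "nest_std indep"
  shows "(\<forall>C. circuit ground indep C \<and> mrank indep C < mrank indep ground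
              \<longrightarrow> card C \<in> {4, 6})
    \<and> (\<forall>C. circuit ground indep C \<and> card C = 4 \<longrightarrow> C \<in> nest_circuits)
    \<and> (\<forall>i j k l. circuit ground indep {E i, E j, P k, P l} \<longrightarrow>
          circuit ground indep ({E i, E j} \<union> (Ps - {P k, P l})) \<and>
          card ({E i, E j} \<union> (Ps - {P k, P l})) = 6 \<and>
          circuit ground indep ((Es - {E i, E j}) \<union> {P k, P l}) \<and>
          card ((Es - {E i, E j}) \<union> {P k, P l}) = 6)
    \<and> (\<forall>C. circuit ground indep C \<and> card C = 6 \<and>
          \<not> (\<exists>i j k l. circuit ground indep {E i, E j, P k, P l} \<and>
               (C = {E i, E j} \<union> (Ps - {P k, P l}) \<or> C = (Es - {E i, E j}) \<union> {P k, P l}))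
          \<longrightarrow> C \<in> {Es, Ps})"
proof -
  have M: "matroid ground indep" and R: "mrank indep ground = 6"
    using assms by (simp_all add: nest_std_def)
  note candidate = nest_small_circuit_is_candidate[OF assms]
  note candidate_card = card_small_circuit_candidate[OF candidate]
  have "card C \<in> {4, 6}" if C: "circuit ground indep C" and "mrank indep C < mrank indep ground" for C
  proof -
    have "card C \<le> 6" using circuit_card_le_Suc_mrank[OF M C] R that(2) by simp
    then show ?thesis using candidate_card[OF C] by auto
  qed
  moreover have "C \<in> nest_circuits" if "circuit ground indep C" "card C = 4" for C
    using candidate_card[OF that(1)] that(2) by simp
  moreover have "circuit ground indep ({E i, E j} \<union> (Ps - {P k, P l})) \<and>
      card ({E i, E j} \<union> (Ps - {P k, P l})) = 6 \<and>
      circuit ground indep ((Es - {E i, E j}) \<union> {P k, P l}) \<and>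
      card ((Es - {E i, E j}) \<union> {P k, P l}) = 6"
    if "circuit ground indep {E i, E j, P k, P l}" for i j k l
    using nest_hexads_of_quad_circuit[OF assms that] nest_hexad_circuit[OF assms] card_nest_hexad
    by blast
  moreover have "C \<in> {Es, Ps}"
    if "circuit ground indep C" "card C = 6"
      "\<not> (\<exists>i j k l. circuit ground indep {E i, E j, P k, P l} \<and>
          (C = {E i, E j} \<union> (Ps - {P k, P l}) \<or> C = (Es - {E i, E j}) \<union> {P k, P l}))" for C
  proof -
    have "C \<in> nest_hexads \<union> {Es, Ps}"
      using candidate[OF that(1)] that(2) card_nest_circuit by (auto simp: small_circuit_candidates_def)
    then show ?thesis using nest_hexad_from_quad_circuit[OF assms] that(3) by blast
  qed
  ultimately show ?thesis by blast
qed

end
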